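(* (a) For every $\epsilon>0$ there are infinitely many natural numbers $k$ with $h(k)>(2-\epsilon)k$. (b) For every $\epsilon>0$ there is $K$ such that $h(k)<(2+\epsilon)k\ln k$ for all $k\geq K$ (in particular $h(k)$ exists for every $k$).
   Context: Graphs are finite, may have multiple edges but no loops. For an Abelian group $\Gamma$, a graph $G$ is $\Gamma$-colorable if for some (equivalently, any) orientation $D$ of $G$ and every function $\varphi:E(G)\to\Gamma$ there is a vertex coloring $c:V(G)\to\Gamma$ with $c(w)-c(u)\neq\varphi(uw)$ for every directed edge $uw$ of $D$. For a natural number $k$, $h(k)$ is the least number such that whenever a graph $G$ is $\Gamma$-colorable for some Abelian group $\Gamma$ of order $k$, $G$ is also $\Gamma'$-colorable for every Abelian group $\Gamma'$ of order $|\Gamma'|\geq h(k)$. *)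

theory Defs
  imports Complex_Main "HOL-Algebra.Group"
begin

text \<open>A finite (multi)graph without loops, given together with an orientation:
  vertex set V, edge set E (edges are abstract objects, so parallel edges are allowed),
  and ends e = (u, w) meaning e is directed from u to w.\<close>
definition is_oriented_graph :: "'v set \<Rightarrow> 'e set \<Rightarrow> ('e \<Rightarrow> 'v \<times> 'v) \<Rightarrow> bool" where
  "is_oriented_graph V E ends \<longleftrightarrow> finite V \<and> finite E \<and>
     (\<forall>e\<in>E. fst (ends e) \<in> V \<and> snd (ends e) \<in> V \<and> fst (ends e) \<noteq> snd (ends e))"

text \<open>Group colorability (abelian group written multiplicatively, as in HOL-Algebra):
  for every phi : E -> Gamma there is c : V -> Gamma with c(w) - c(u) \<noteq> phi(uw).\<close>
definition group_colorable ::
  "'v set \<Rightarrow> 'e set \<Rightarrow> ('e \<Rightarrow> 'v \<times> 'v) \<Rightarrow> ('g, 'm) monoid_scheme \<Rightarrow> bool" where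
  "group_colorable V E ends \<Gamma> \<longleftrightarrow>
     (\<forall>\<phi> \<in> E \<rightarrow> carrier \<Gamma>. \<exists>c \<in> V \<rightarrow> carrier \<Gamma>.
        \<forall>e\<in>E. c (snd (ends e)) \<otimes>\<^bsub>\<Gamma>\<^esub> inv\<^bsub>\<Gamma>\<^esub> (c (fst (ends e))) \<noteq> \<phi> e)"

text \<open>Finite abelian group of order k. Graphs and groups are represented on nat
  (every finite graph / finite group is isomorphic to one of these, and colorability
  is invariant under isomorphism).\<close>
definition abelian_of_order :: "('g, 'm) monoid_scheme \<Rightarrow> nat \<Rightarrow> bool" where
  "abelian_of_order \<Gamma> k \<longleftrightarrow> comm_group \<Gamma> \<and> finite (carrier \<Gamma>) \<and> card (carrier \<Gamma>) = k"

definition h_bound :: "nat \<Rightarrow> nat \<Rightarrow> bool" where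
  "h_bound k n \<longleftrightarrow>
     (\<forall>(V :: nat set) (E :: nat set) ends (\<Gamma> :: nat monoid).
        is_oriented_graph V E ends \<and> abelian_of_order \<Gamma> k \<and> group_colorable V E ends \<Gamma> \<longrightarrow>
        (\<forall>(\<Gamma>' :: nat monoid) m. abelian_of_order \<Gamma>' m \<and> m \<ge> n \<longrightarrow>
            group_colorable V E ends \<Gamma>'))"

definition h :: "nat \<Rightarrow> nat" where
  "h k = (LEAST n. h_bound k n)"

end

theory Submission
  imports Defs "HOL-Number_Theory.Number_Theory" "HOL-Real_Asymp.Real_Asymp"
begin

text \<open>
  Upper bound: if \<open>G\<close> is \<open>\<Gamma>\<close>-colourable with \<open>|\<Gamma>| = k\<close>, then every vertex set \<open>W\<close>
  spans at most \<open>|W| k ln k\<close> edges, because the \<open>k^|W|\<close> colourings of \<open>W\<close> must avoid all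
  \<open>k^|E(W)|\<close> labellings while each of them avoids only \<open>(k - 1)^|E(W)|\<close>. So \<open>G\<close> is
  \<open>2k ln k\<close>-degenerate and can be coloured greedily over any group with more elements.

  Lower bound: for an odd prime \<open>p\<close>, the \<open>p\<close>-cycle with every edge replaced by \<open>p - 2\<close>
  parallel edges is \<open>\<int>\<^sub>p\<close>-colourable, since by Cauchy--Davenport one can pick on every
  bundle an admissible colour difference so that these differences sum to \<open>0\<close>; but it is
  not \<open>\<int>\<^sub>2\<^sub>(\<^sub>p\<^sub>-\<^sub>2\<^sub>)\<close>-colourable. Hence \<open>h p \<ge> 2p - 3\<close> for every odd prime \<open>p\<close>.
\<close>

definition proper_coloring ::
  "('g, 'm) monoid_scheme \<Rightarrow> 'e set \<Rightarrow> ('e \<Rightarrow> 'v \<times> 'v) \<Rightarrow> ('e \<Rightarrow> 'g) \<Rightarrow> ('v \<Rightarrow> 'g) \<Rightarrow> bool"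
  where "proper_coloring \<Gamma> E ends \<phi> c \<longleftrightarrow>
    (\<forall>e\<in>E. c (snd (ends e)) \<otimes>\<^bsub>\<Gamma>\<^esub> inv\<^bsub>\<Gamma>\<^esub> (c (fst (ends e))) \<noteq> \<phi> e)"

lemma group_colorable_iff_proper_coloring:
  "group_colorable V E ends \<Gamma> \<longleftrightarrow>
    (\<forall>\<phi> \<in> E \<rightarrow> carrier \<Gamma>. \<exists>c \<in> V \<rightarrow> carrier \<Gamma>. proper_coloring \<Gamma> E ends \<phi> c)"
  by (simp add: group_colorable_def proper_coloring_def)

section \<open>Cyclic groups on initial segments of nat\<close>

definition zmod_group :: "nat \<Rightarrow> nat monoid" where
  "zmod_group n = \<lparr>carrier = {..<n}, monoid.mult = (\<lambda>x y. (x + y) mod n), one = 0\<rparr>"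

lemma zmod_group_simps [simp]:
  "carrier (zmod_group n) = {..<n}"
  "x \<otimes>\<^bsub>zmod_group n\<^esub> y = (x + y) mod n"
  "\<one>\<^bsub>zmod_group n\<^esub> = 0"
  by (simp_all add: zmod_group_def)

lemma comm_group_zmod_group:
  assumes "0 < n"
  shows "comm_group (zmod_group n)"
proof (rule comm_groupI)
  fix x assume "x \<in> carrier (zmod_group n)"
  then have "(n - x) mod n \<in> carrier (zmod_group n)"
    and "(n - x) mod n \<otimes>\<^bsub>zmod_group n\<^esub> x = \<one>\<^bsub>zmod_group n\<^esub>"
    using assms by (simp_all add: mod_add_left_eq)
  then show "\<exists>y\<in>carrier (zmod_group n). y \<otimes>\<^bsub>zmod_group n\<^esub> x = \<one>\<^bsub>zmod_group n\<^esub>"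
    by blast
next
  fix x y z :: nat
  show "x \<otimes>\<^bsub>zmod_group n\<^esub> y \<otimes>\<^bsub>zmod_group n\<^esub> z = x \<otimes>\<^bsub>zmod_group n\<^esub> (y \<otimes>\<^bsub>zmod_group n\<^esub> z)"
    by (simp add: mod_add_left_eq mod_add_right_eq add.assoc)
qed (use assms in \<open>simp_all add: add.commute\<close>)

lemma abelian_of_order_zmod_group: "0 < n \<Longrightarrow> abelian_of_order (zmod_group n) n"
  by (simp add: abelian_of_order_def comm_group_zmod_group)

lemma zmod_group_div_eq_iff:
  assumes "0 < n" "a < n" "b < n" "x < n"
  shows "a \<otimes>\<^bsub>zmod_group n\<^esub> inv\<^bsub>zmod_group n\<^esub> b = x \<longleftrightarrow> (x + b) mod n = a"
proof -
  interpret comm_group "zmod_group n" using comm_group_zmod_group [OF assms(1)] .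
  show ?thesis using inv_solve_right' [of x a b] assms by auto
qed

lemma zmod_group_div_less:
  assumes "0 < n" "a < n" "b < n"
  shows "a \<otimes>\<^bsub>zmod_group n\<^esub> inv\<^bsub>zmod_group n\<^esub> b < n"
proof -
  interpret comm_group "zmod_group n" using comm_group_zmod_group [OF assms(1)] .
  show ?thesis using assms by simp
qed

lemma mod_add_right_cancel_less:
  fixes x y b n :: nat
  assumes "x < n" "y < n" "(x + b) mod n = (y + b) mod n"
  shows "x = y"
  using assms cong_add_rcancel_nat [of x b y n] by (simp add: Cong.cong_def)

section \<open>A weak Cauchy--Davenport theorem\<close>

definition mod_sumset :: "nat \<Rightarrow> nat set \<Rightarrow> nat set \<Rightarrow> nat set" where
  "mod_sumset p A B = {(a + b) mod p | a b. a \<in> A \<and> b \<in> B}"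

lemma translation_invariant_mod_eq_all:
  fixes p d :: nat
  assumes "coprime d p" and A: "A \<subseteq> {..<p}" "A \<noteq> {}"
    and invariant: "\<And>x. x \<in> A \<Longrightarrow> (x + d) mod p \<in> A"
  shows "A = {..<p}"
proof -
  obtain x0 where x0: "x0 \<in> A" using A(2) by blast
  have orbit: "(x0 + n * d) mod p \<in> A" for n
  proof (induction n)
    case 0
    show ?case using x0 A(1) by auto
  next
    case (Suc n)
    have "((x0 + n * d) mod p + d) mod p = (x0 + Suc n * d) mod p"
      by (metis mod_add_left_eq add.assoc add.commute mult_Suc)
    then show ?case using invariant [OF Suc] by simp
  qed
  obtain u where u: "[d * u = 1] (mod p)" using cong_solve_coprime_nat [OF \<open>coprime d p\<close>] by auto
  have "z \<in> A" if z: "z < p" for z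
  proof -
    have "x0 < p" using x0 A(1) by auto
    have "[x0 + (u * (z + p - x0)) * d = x0 + (d * u) * (z + p - x0)] (mod p)"
      by (simp add: algebra_simps)
    also have "[x0 + (d * u) * (z + p - x0) = x0 + 1 * (z + p - x0)] (mod p)"
      by (intro cong_add cong_mult u cong_refl)
    also have "x0 + 1 * (z + p - x0) = z + p" using \<open>x0 < p\<close> by simp
    finally have "(x0 + (u * (z + p - x0)) * d) mod p = z"
      using z by (simp add: Cong.cong_def)
    then show ?thesis using orbit by metis
  qed
  then show ?thesis using A(1) by auto
qed

lemma translate_mod_subset_imp_invariant:
  fixes p a b :: nat
  assumes "a < p" "A \<subseteq> {..<p}"
    and translates: "(\<lambda>x. (x + b) mod p) ` A \<subseteq> (\<lambda>x. (x + a) mod p) ` A" and "x \<in> A"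
  shows "(x + (b + p - a)) mod p \<in> A"
proof -
  have "(x + b) mod p \<in> (\<lambda>x. (x + a) mod p) ` A"
    using \<open>x \<in> A\<close> by (intro subsetD [OF translates] imageI)
  then obtain y where y: "y \<in> A" "(y + a) mod p = (x + b) mod p"
    by (metis (no_types, lifting) imageE)
  have "x + (b + p - a) + a = x + b + p" using \<open>a < p\<close> by simp
  then have "(x + (b + p - a) + a) mod p = (x + b) mod p" by (metis mod_add_self2)
  then have "[y + a = x + (b + p - a) + a] (mod p)"
    using y(2) by (simp add: Cong.cong_def)
  then have "[y = x + (b + p - a)] (mod p)" by (simp only: cong_add_rcancel_nat)
  then have "y = (x + (b + p - a)) mod p"
    using y(1) \<open>A \<subseteq> {..<p}\<close> by (auto simp: Cong.cong_def)
  then show ?thesis using y(1) by simp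
qed

lemma coprime_add_diff_prime:
  fixes p a b :: nat
  assumes "prime p" "a < p" "b < p" "a \<noteq> b"
  shows "coprime (b + p - a) p"
proof -
  have "\<not> p dvd b + p - a"
  proof
    assume "p dvd b + p - a"
    then have "[b + p - a + a = 0 + a] (mod p)"
      by (simp only: cong_add_rcancel_nat cong_0_iff)
    moreover have "b + p - a + a = b + p" using \<open>a < p\<close> by simp
    ultimately show False
      using assms(2-4) by (simp add: Cong.cong_def)
  qed
  then show ?thesis
    using \<open>prime p\<close> by (metis prime_imp_coprime coprime_commute)
qed

text \<open>If \<open>|A + S| \<le> |A|\<close>, then \<open>A + a = A + b\<close> for distinct \<open>a, b \<in> S\<close>, so \<open>A\<close> is
  invariant under translation by \<open>b - a\<close>.\<close>

lemma card_mod_sumset_ge: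
  fixes p :: nat
  assumes "prime p" and A: "A \<subseteq> {..<p}" "A \<noteq> {}"
    and S: "S \<subseteq> {..<p}" "2 \<le> card S"
  shows "min p (card A + 1) \<le> card (mod_sumset p A S)"
proof (rule ccontr)
  assume small: "\<not> ?thesis"
  have "0 < p" using \<open>prime p\<close> prime_gt_0_nat by blast
  have fin: "finite (mod_sumset p A S)"
    by (rule finite_subset [of _ "{..<p}"]) (use \<open>0 < p\<close> in \<open>auto simp: mod_sumset_def\<close>)
  obtain a b where ab: "a \<in> S" "b \<in> S" "a \<noteq> b"
    using obtain_subset_with_card_n [OF S(2)] by (metis card_2_iff insert_subset)
  have translate_sub: "(\<lambda>x. (x + s) mod p) ` A \<subseteq> mod_sumset p A S" if "s \<in> S" for s
    using that by (auto simp: mod_sumset_def)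
  have card_translate: "card ((\<lambda>x. (x + s) mod p) ` A) = card A" for s
  proof (rule card_image, rule inj_onI)
    fix x y assume "x \<in> A" "y \<in> A" "(x + s) mod p = (y + s) mod p"
    then show "x = y" using A(1) mod_add_right_cancel_less by blast
  qed
  have "card A \<le> card (mod_sumset p A S)"
    using card_mono [OF fin translate_sub [OF ab(1)]] card_translate by simp
  then have "card A < p" and "card (mod_sumset p A S) \<le> card A"
    using small by auto
  have translate_eq: "(\<lambda>x. (x + s) mod p) ` A = mod_sumset p A S" if "s \<in> S" for s
    using card_subset_eq [OF fin translate_sub [OF that]] card_translate
      card_mono [OF fin translate_sub [OF that]] \<open>card (mod_sumset p A S) \<le> card A\<close>
    by simp
  have "a < p" "b < p" using ab S(1) by auto
  have "A = {..<p}"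
  proof (rule translation_invariant_mod_eq_all
      [OF coprime_add_diff_prime [OF \<open>prime p\<close> \<open>a < p\<close> \<open>b < p\<close> ab(3)] A])
    fix x assume "x \<in> A"
    show "(x + (b + p - a)) mod p \<in> A"
      by (rule translate_mod_subset_imp_invariant [OF \<open>a < p\<close> A(1) _ \<open>x \<in> A\<close>])
        (simp only: translate_eq [OF ab(1)] translate_eq [OF ab(2)] subset_refl)
  qed
  then show False using \<open>card A < p\<close> by simp
qed

definition choice_sums :: "nat \<Rightarrow> (nat \<Rightarrow> nat set) \<Rightarrow> nat \<Rightarrow> nat set" where
  "choice_sums p S j = {(\<Sum>i<j. d i) mod p | d. \<forall>i<j. d i \<in> S i}"

lemma choice_sums_subset: "0 < p \<Longrightarrow> choice_sums p S j \<subseteq> {..<p}"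
  by (auto simp: choice_sums_def)

lemma mod_sumset_choice_sums_subset:
  "mod_sumset p (choice_sums p S j) (S j) \<subseteq> choice_sums p S (Suc j)"
proof
  fix y assume "y \<in> mod_sumset p (choice_sums p S j) (S j)"
  then obtain d s where d: "\<forall>i<j. d i \<in> S i" and "s \<in> S j"
    and y: "y = ((\<Sum>i<j. d i) mod p + s) mod p"
    by (auto simp: mod_sumset_def choice_sums_def)
  have "y = (\<Sum>i<Suc j. (d(j := s)) i) mod p"
    using y by (simp add: mod_add_left_eq)
  moreover have "\<forall>i<Suc j. (d(j := s)) i \<in> S i"
    using d \<open>s \<in> S j\<close> by (auto simp: less_Suc_eq)
  ultimately show "y \<in> choice_sums p S (Suc j)"
    unfolding choice_sums_def by blast
qed

lemma card_choice_sums_ge: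
  fixes p :: nat
  assumes "prime p" and S: "\<And>i. S i \<subseteq> {..<p}" "\<And>i. 2 \<le> card (S i)"
  shows "min p (j + 1) \<le> card (choice_sums p S j)"
proof (induction j)
  case 0
  have "choice_sums p S 0 = {0}" by (auto simp: choice_sums_def)
  then show ?case by simp
next
  case (Suc j)
  have "0 < p" using \<open>prime p\<close> prime_gt_0_nat by blast
  have "choice_sums p S j \<noteq> {}" using Suc \<open>0 < p\<close> by auto
  then have "min p (card (choice_sums p S j) + 1) \<le> card (mod_sumset p (choice_sums p S j) (S j))"
    using card_mod_sumset_ge [OF \<open>prime p\<close> choice_sums_subset [OF \<open>0 < p\<close>] _ S] by blast
  also have "\<dots> \<le> card (choice_sums p S (Suc j))"
    by (rule card_mono [OF finite_subset [OF choice_sums_subset [OF \<open>0 < p\<close>]]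
          mod_sumset_choice_sums_subset]) simp
  finally show ?case using Suc by simp
qed

lemma exists_choice_sum_zero_mod_prime:
  fixes p :: nat
  assumes "prime p" and S: "\<And>i. S i \<subseteq> {..<p}" "\<And>i. 2 \<le> card (S i)"
  obtains d where "\<forall>i<p. d i \<in> S i" "(\<Sum>i<p. d i) mod p = 0"
proof -
  have "0 < p" using \<open>prime p\<close> prime_gt_0_nat by blast
  have "card {..<p} \<le> card (choice_sums p S p)"
    using card_choice_sums_ge [OF assms, of p] by simp
  then have "choice_sums p S p = {..<p}"
    by (rule card_seteq [OF finite_lessThan choice_sums_subset [OF \<open>0 < p\<close>]])
  then have "0 \<in> choice_sums p S p" using \<open>0 < p\<close> by simp
  then show thesis using that by (auto simp: choice_sums_def)
qed

section \<open>A multicycle separating \<open>\<int>\<^sub>p\<close> from \<open>\<int>\<^sub>2\<^sub>(\<^sub>p\<^sub>-\<^sub>2\<^sub>)\<close>\<close>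

text \<open>The \<open>p\<close>-cycle with every edge replaced by \<open>M\<close> parallel edges: the edges
  \<open>i * M, \<dots>, i * M + M - 1\<close> form the bundle from vertex \<open>i\<close> to vertex \<open>i + 1 mod p\<close>.\<close>
definition multicycle_ends :: "nat \<Rightarrow> nat \<Rightarrow> nat \<Rightarrow> nat \<times> nat" where
  "multicycle_ends M p e = (e div M, Suc (e div M) mod p)"

lemma is_oriented_graph_multicycle:
  assumes "2 \<le> p"
  shows "is_oriented_graph {..<p} {..<p * M} (multicycle_ends M p)"
  unfolding is_oriented_graph_def multicycle_ends_def
proof (intro conjI ballI)
  fix e assume "e \<in> {..<p * M}"
  then have "e div M < p" by (simp add: less_mult_imp_div_less)
  then show "fst (e div M, Suc (e div M) mod p) \<in> {..<p}"
    and "fst (e div M, Suc (e div M) mod p) \<noteq> snd (e div M, Suc (e div M) mod p)"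
    using assms by (auto simp: mod_Suc)
qed (use assms in simp_all)

lemma multicycle_bundle_edge:
  fixes M p i j :: nat
  assumes "i < p" "j < M"
  shows "i * M + j < p * M" "multicycle_ends M p (i * M + j) = (i, Suc i mod p)"
proof -
  have "i * M + j < Suc i * M" using \<open>j < M\<close> by simp
  also have "\<dots> \<le> p * M" using \<open>i < p\<close> by (intro mult_right_mono) auto
  finally show "i * M + j < p * M" .
  show "multicycle_ends M p (i * M + j) = (i, Suc i mod p)"
    using \<open>j < M\<close> by (simp add: multicycle_ends_def)
qed

text \<open>Colour vertex \<open>j\<close> by \<open>d\<^sub>0 + \<dots> + d\<^sub>j\<^sub>-\<^sub>1\<close>, where \<open>d\<^sub>i\<close> avoids the \<open>M\<close> labels of
  bundle \<open>i\<close> and the \<open>d\<^sub>i\<close> sum to \<open>0\<close> modulo \<open>p\<close>.\<close>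

lemma multicycle_colorable:
  fixes p M :: nat
  assumes "prime p" "M + 2 \<le> p"
  shows "group_colorable {..<p} {..<p * M} (multicycle_ends M p) (zmod_group p)"
  unfolding group_colorable_iff_proper_coloring
proof
  fix \<phi> assume \<phi>: "\<phi> \<in> {..<p * M} \<rightarrow> carrier (zmod_group p)"
  have "0 < p" using assms by simp
  define S where "S i = {..<p} - \<phi> ` {i * M..<i * M + M}" for i
  have S_sub: "S i \<subseteq> {..<p}" for i by (auto simp: S_def)
  have S_card: "2 \<le> card (S i)" for i
  proof -
    have "card (\<phi> ` {i * M..<i * M + M}) \<le> M"
      using card_image_le [of "{i * M..<i * M + M}" \<phi>] by simp
    then show ?thesis
      using diff_card_le_card_Diff [of "\<phi> ` {i * M..<i * M + M}" "{..<p}"] assms(2)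
      by (simp add: S_def)
  qed
  obtain d where d: "\<forall>i<p. d i \<in> S i" and sum_d: "(\<Sum>i<p. d i) mod p = 0"
    by (rule exists_choice_sum_zero_mod_prime [OF \<open>prime p\<close> S_sub S_card])
  define c where "c j = (\<Sum>i<j. d i) mod p" for j
  have step: "(d i + c i) mod p = c (Suc i mod p)" if "i < p" for i
  proof -
    have "(d i + c i) mod p = (\<Sum>i<Suc i. d i) mod p"
      unfolding c_def sum.lessThan_Suc by (simp add: mod_add_right_eq add.commute)
    then show ?thesis
      using that sum_d by (cases "Suc i = p") (simp_all add: c_def)
  qed
  have "c (Suc i mod p) \<otimes>\<^bsub>zmod_group p\<^esub> inv\<^bsub>zmod_group p\<^esub> c i \<noteq> \<phi> e"
    if e: "e < p * M" and i: "i = e div M" for e i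
  proof -
    have "i < p" using e by (simp add: i less_mult_imp_div_less)
    have "0 < M" using e by (auto intro: gr0I)
    then have "e \<in> {i * M..<i * M + M}"
      using div_mult_mod_eq [of e M] mod_less_divisor [of M e]
      unfolding atLeastLessThan_iff i by linarith
    then have "\<phi> e \<in> \<phi> ` {i * M..<i * M + M}" by (rule imageI)
    moreover have "d i \<notin> \<phi> ` {i * M..<i * M + M}" using d \<open>i < p\<close> by (simp add: S_def)
    ultimately have "\<phi> e \<noteq> d i" by metis
    moreover have "\<phi> e < p" "d i < p" using \<phi> e d S_sub \<open>i < p\<close> by auto
    ultimately have "(\<phi> e + c i) mod p \<noteq> c (Suc i mod p)"
      using step [OF \<open>i < p\<close>] mod_add_right_cancel_less by metis
    moreover have "c j < p" for j using \<open>0 < p\<close> by (simp add: c_def)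
    ultimately show ?thesis
      using zmod_group_div_eq_iff [OF \<open>0 < p\<close>] \<open>\<phi> e < p\<close> by simp
  qed
  then have "proper_coloring (zmod_group p) {..<p * M} (multicycle_ends M p) \<phi> c"
    by (simp add: proper_coloring_def multicycle_ends_def)
  moreover have "c \<in> {..<p} \<rightarrow> carrier (zmod_group p)" using \<open>0 < p\<close> by (simp add: c_def)
  ultimately show "\<exists>c\<in>{..<p} \<rightarrow> carrier (zmod_group p).
      proper_coloring (zmod_group p) {..<p * M} (multicycle_ends M p) \<phi> c"
    by blast
qed

text \<open>The labels \<open>0, 2, \<dots>, 2M - 2\<close> on every bundle force each colour difference along
  the cycle to be odd, which is impossible around an odd cycle.\<close>

lemma multicycle_not_colorable:
  fixes p M :: nat
  assumes "odd p" "0 < M"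
  shows "\<not> group_colorable {..<p} {..<p * M} (multicycle_ends M p) (zmod_group (2 * M))"
proof
  define \<phi> where "\<phi> e = 2 * (e mod M)" for e
  have "\<phi> \<in> {..<p * M} \<rightarrow> carrier (zmod_group (2 * M))"
    using \<open>0 < M\<close> by (auto simp: \<phi>_def)
  moreover assume "group_colorable {..<p} {..<p * M} (multicycle_ends M p) (zmod_group (2 * M))"
  ultimately obtain c where c: "c \<in> {..<p} \<rightarrow> carrier (zmod_group (2 * M))"
    and proper: "proper_coloring (zmod_group (2 * M)) {..<p * M} (multicycle_ends M p) \<phi> c"
    unfolding group_colorable_iff_proper_coloring by blast
  have "0 < 2 * M" using \<open>0 < M\<close> by simp
  have c_less: "c i < 2 * M" if "i < p" for i using c that by auto
  have parity_flip: "even (c (Suc i mod p)) \<longleftrightarrow> odd (c i)" if "i < p" for i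
  proof -
    have "Suc i mod p < p" using \<open>i < p\<close> by simp
    define r where "r = c (Suc i mod p) \<otimes>\<^bsub>zmod_group (2 * M)\<^esub> inv\<^bsub>zmod_group (2 * M)\<^esub> c i"
    have "r < 2 * M"
      unfolding r_def by (rule zmod_group_div_less [OF \<open>0 < 2 * M\<close> c_less c_less]) fact+
    then have r: "(r + c i) mod (2 * M) = c (Suc i mod p)"
      using zmod_group_div_eq_iff [OF \<open>0 < 2 * M\<close> c_less c_less] \<open>i < p\<close> \<open>Suc i mod p < p\<close> r_def
      by blast
    have "odd r"
    proof
      assume "even r"
      then obtain j where j: "r = 2 * j" ..
      then have "j < M" using \<open>r < 2 * M\<close> by simp
      then have "\<phi> (i * M + j) = r" using j by (simp add: \<phi>_def)
      moreover have "r \<noteq> \<phi> (i * M + j)"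
        using proper multicycle_bundle_edge [OF \<open>i < p\<close> \<open>j < M\<close>]
        unfolding proper_coloring_def r_def by (metis fst_conv snd_conv lessThan_iff)
      ultimately show False by simp
    qed
    then show ?thesis
      using r dvd_mod_iff [of 2 "2 * M" "r + c i"] by simp
  qed
  have parity: "even (c i) \<longleftrightarrow> (even (c 0) \<longleftrightarrow> even i)" if "i < p" for i
    using that
  proof (induction i)
    case (Suc i)
    then show ?case using parity_flip [of i] by simp
  qed simp
  have "p - 1 < p" "Suc (p - 1) mod p = 0" "even (p - 1)"
    using \<open>odd p\<close> by (auto simp: odd_pos)
  then show False
    using parity_flip [of "p - 1"] parity [of "p - 1"] by simp
qed

section \<open>Colourable graphs are degenerate\<close>

definition induced_edges :: "'e set \<Rightarrow> ('e \<Rightarrow> 'v \<times> 'v) \<Rightarrow> 'v set \<Rightarrow> 'e set" where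
  "induced_edges E ends W = {e\<in>E. fst (ends e) \<in> W \<and> snd (ends e) \<in> W}"

definition induced_degree :: "'e set \<Rightarrow> ('e \<Rightarrow> 'v \<times> 'v) \<Rightarrow> 'v set \<Rightarrow> 'v \<Rightarrow> nat" where
  "induced_degree E ends W v =
     card {e\<in>induced_edges E ends W. fst (ends e) = v \<or> snd (ends e) = v}"

lemma induced_edges_all:
  "is_oriented_graph V E ends \<Longrightarrow> induced_edges E ends V = E"
  by (auto simp: induced_edges_def is_oriented_graph_def)

lemma proper_coloring_extend:
  fixes \<Gamma> :: "('g, 'm) monoid_scheme" (structure)
  assumes "group \<Gamma>" "finite E" and loopless: "\<forall>e\<in>E. fst (ends e) \<noteq> snd (ends e)"
    and \<phi>: "\<phi> \<in> E \<rightarrow> carrier \<Gamma>" and c: "\<And>x. c x \<in> carrier \<Gamma>"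
    and proper: "proper_coloring \<Gamma> (induced_edges E ends (W - {v})) ends \<phi> c"
    and degree: "induced_degree E ends W v < card (carrier \<Gamma>)"
  obtains x where "x \<in> carrier \<Gamma>" "proper_coloring \<Gamma> (induced_edges E ends W) ends \<phi> (c(v := x))"
proof -
  interpret group \<Gamma> by fact
  define N where "N = {e\<in>induced_edges E ends W. fst (ends e) = v \<or> snd (ends e) = v}"
  define forbidden where "forbidden e =
    (if snd (ends e) = v then \<phi> e \<otimes> c (fst (ends e)) else inv (\<phi> e) \<otimes> c (snd (ends e)))" for e
  have "finite N" using \<open>finite E\<close> by (simp add: N_def induced_edges_def)
  then have "card (forbidden ` N) < card (carrier \<Gamma>)"
    using card_image_le [of N forbidden] degree by (simp add: induced_degree_def N_def)
  then obtain x where x: "x \<in> carrier \<Gamma>" "x \<notin> forbidden ` N"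
    by (metis card_mono finite_imageI \<open>finite N\<close> not_le subsetI)
  have "(c(v := x)) (snd (ends e)) \<otimes> inv ((c(v := x)) (fst (ends e))) \<noteq> \<phi> e"
    if e: "e \<in> induced_edges E ends W" for e
  proof -
    have "e \<in> E" and "\<phi> e \<in> carrier \<Gamma>" using e \<phi> by (auto simp: induced_edges_def)
    consider (old) "e \<notin> N" | (into_v) "snd (ends e) = v" | (out_of_v) "fst (ends e) = v" "snd (ends e) \<noteq> v"
      using e by (auto simp: N_def)
    then show ?thesis
    proof cases
      case old
      then have "e \<in> induced_edges E ends (W - {v})"
        using e by (auto simp: N_def induced_edges_def)
      then show ?thesis using old proper by (auto simp: proper_coloring_def N_def e)
    next
      case into_v
      then have "fst (ends e) \<noteq> v" "e \<in> N" using loopless \<open>e \<in> E\<close> e by (auto simp: N_def)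
      then have "x \<noteq> \<phi> e \<otimes> c (fst (ends e))" using x into_v by (auto simp: forbidden_def)
      then show ?thesis
        using into_v \<open>fst (ends e) \<noteq> v\<close> inv_solve_right' [OF \<open>\<phi> e \<in> carrier \<Gamma>\<close> x(1) c] by simp
    next
      case out_of_v
      then have "e \<in> N" using e by (auto simp: N_def)
      then have "x \<noteq> inv (\<phi> e) \<otimes> c (snd (ends e))" using x out_of_v by (auto simp: forbidden_def)
      then show ?thesis
        using out_of_v inv_solve_right' [OF \<open>\<phi> e \<in> carrier \<Gamma>\<close> c x(1)]
          inv_solve_left [OF x(1) \<open>\<phi> e \<in> carrier \<Gamma>\<close> c] by simp
    qed
  qed
  then show thesis using that x(1) by (simp add: proper_coloring_def)
qed

lemma group_colorable_if_degenerate: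
  fixes \<Gamma> :: "('g, 'm) monoid_scheme" (structure)
  assumes graph: "is_oriented_graph V E ends" and "group \<Gamma>"
    and low_degree: "\<And>W. W \<subseteq> V \<Longrightarrow> W \<noteq> {} \<Longrightarrow>
      \<exists>v\<in>W. induced_degree E ends W v < card (carrier \<Gamma>)"
  shows "group_colorable V E ends \<Gamma>"
  unfolding group_colorable_iff_proper_coloring
proof
  interpret group \<Gamma> by fact
  fix \<phi> assume \<phi>: "\<phi> \<in> E \<rightarrow> carrier \<Gamma>"
  have "finite V" "finite E" and loopless: "\<forall>e\<in>E. fst (ends e) \<noteq> snd (ends e)"
    using graph by (auto simp: is_oriented_graph_def)
  have "\<exists>c. (\<forall>x. c x \<in> carrier \<Gamma>) \<and> proper_coloring \<Gamma> (induced_edges E ends V) ends \<phi> c"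
    using \<open>finite V\<close>
  proof (induction rule: finite_remove_induct)
    case empty
    show ?case by (auto simp: proper_coloring_def induced_edges_def intro!: exI [of _ "\<lambda>_. \<one>"])
  next
    case (remove W)
    then obtain v where "v \<in> W" "induced_degree E ends W v < card (carrier \<Gamma>)"
      using low_degree by blast
    moreover obtain c where "\<And>x. c x \<in> carrier \<Gamma>"
      "proper_coloring \<Gamma> (induced_edges E ends (W - {v})) ends \<phi> c"
      using remove.IH [OF \<open>v \<in> W\<close>] by blast
    ultimately obtain x where "x \<in> carrier \<Gamma>"
      and "proper_coloring \<Gamma> (induced_edges E ends W) ends \<phi> (c(v := x))"
      using proper_coloring_extend [OF \<open>group \<Gamma>\<close> \<open>finite E\<close> loopless \<phi>] by metis
    moreover have "\<forall>y. (c(v := x)) y \<in> carrier \<Gamma>"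
      using \<open>\<And>x. c x \<in> carrier \<Gamma>\<close> \<open>x \<in> carrier \<Gamma>\<close> by simp
    ultimately show ?case by blast
  qed
  then show "\<exists>c\<in>V \<rightarrow> carrier \<Gamma>. proper_coloring \<Gamma> E ends \<phi> c"
    using induced_edges_all [OF graph] by auto
qed

definition avoiding_labellings ::
  "('g, 'm) monoid_scheme \<Rightarrow> 'e set \<Rightarrow> ('e \<Rightarrow> 'v \<times> 'v) \<Rightarrow> ('v \<Rightarrow> 'g) \<Rightarrow> ('e \<Rightarrow> 'g) set"
  where "avoiding_labellings \<Gamma> F ends c =
    (\<Pi>\<^sub>E e\<in>F. carrier \<Gamma> - {c (snd (ends e)) \<otimes>\<^bsub>\<Gamma>\<^esub> inv\<^bsub>\<Gamma>\<^esub> (c (fst (ends e)))})"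

lemma card_avoiding_labellings:
  fixes \<Gamma> :: "('g, 'm) monoid_scheme" (structure)
  assumes "group \<Gamma>" "finite (carrier \<Gamma>)" "finite F"
    and c: "\<And>e. e \<in> F \<Longrightarrow> c (fst (ends e)) \<in> carrier \<Gamma> \<and> c (snd (ends e)) \<in> carrier \<Gamma>"
  shows "card (avoiding_labellings \<Gamma> F ends c) = (card (carrier \<Gamma>) - 1) ^ card F"
proof -
  interpret group \<Gamma> by fact
  have "card (carrier \<Gamma> - {c (snd (ends e)) \<otimes> inv (c (fst (ends e)))}) = card (carrier \<Gamma>) - 1"
    if "e \<in> F" for e
    using c [OF that] \<open>finite (carrier \<Gamma>)\<close> by simp
  then show ?thesis by (simp add: avoiding_labellings_def card_PiE [OF \<open>finite F\<close>])
qed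

lemma labellings_subset_UN_avoiding_labellings:
  fixes \<Gamma> :: "('g, 'm) monoid_scheme" (structure)
  assumes "group \<Gamma>" and colorable: "group_colorable V E ends \<Gamma>" and "W \<subseteq> V"
  defines "F \<equiv> induced_edges E ends W"
  shows "(\<Pi>\<^sub>E e\<in>F. carrier \<Gamma>) \<subseteq> (\<Union>c\<in>(\<Pi>\<^sub>E v\<in>W. carrier \<Gamma>). avoiding_labellings \<Gamma> F ends c)"
proof
  interpret group \<Gamma> by fact
  fix \<phi> assume \<phi>: "\<phi> \<in> (\<Pi>\<^sub>E e\<in>F. carrier \<Gamma>)"
  define \<psi> where "\<psi> e = (if e \<in> F then \<phi> e else \<one>)" for e
  have "\<psi> \<in> E \<rightarrow> carrier \<Gamma>" using \<phi> by (auto simp: \<psi>_def)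
  then obtain c where c: "c \<in> V \<rightarrow> carrier \<Gamma>" and proper: "proper_coloring \<Gamma> E ends \<psi> c"
    using colorable unfolding group_colorable_iff_proper_coloring by blast
  have "restrict c W \<in> (\<Pi>\<^sub>E v\<in>W. carrier \<Gamma>)" using c \<open>W \<subseteq> V\<close> by auto
  moreover have "\<phi> \<in> avoiding_labellings \<Gamma> F ends (restrict c W)"
    unfolding avoiding_labellings_def
  proof (rule PiE_I)
    fix e assume "e \<in> F"
    then have "e \<in> E" "fst (ends e) \<in> W" "snd (ends e) \<in> W"
      by (auto simp: F_def induced_edges_def)
    then show "\<phi> e \<in> carrier \<Gamma> - {restrict c W (snd (ends e)) \<otimes> inv (restrict c W (fst (ends e)))}"
      using proper \<phi> \<open>e \<in> F\<close> by (auto simp: proper_coloring_def \<psi>_def)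
  qed (use \<phi> in auto)
  ultimately show "\<phi> \<in> (\<Union>c\<in>(\<Pi>\<^sub>E v\<in>W. carrier \<Gamma>). avoiding_labellings \<Gamma> F ends c)" by blast
qed

lemma colorable_pow_card_induced_edges_le:
  fixes \<Gamma> :: "('g, 'm) monoid_scheme" (structure)
  assumes graph: "is_oriented_graph V E ends" and "group \<Gamma>" "finite (carrier \<Gamma>)"
    and colorable: "group_colorable V E ends \<Gamma>" and "W \<subseteq> V"
  defines "k \<equiv> card (carrier \<Gamma>)" and "F \<equiv> induced_edges E ends W"
  shows "k ^ card F \<le> k ^ card W * (k - 1) ^ card F"
proof -
  have "finite W" using \<open>W \<subseteq> V\<close> graph finite_subset by (auto simp: is_oriented_graph_def)
  have "finite F" using graph by (simp add: F_def induced_edges_def is_oriented_graph_def)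
  have card_avoiding: "card (avoiding_labellings \<Gamma> F ends c) = (k - 1) ^ card F"
    if "c \<in> (\<Pi>\<^sub>E v\<in>W. carrier \<Gamma>)" for c
    using that unfolding k_def
    by (intro card_avoiding_labellings [OF \<open>group \<Gamma>\<close> \<open>finite (carrier \<Gamma>)\<close> \<open>finite F\<close>])
      (auto simp: F_def induced_edges_def)
  have "finite (\<Union>c\<in>(\<Pi>\<^sub>E v\<in>W. carrier \<Gamma>). avoiding_labellings \<Gamma> F ends c)"
    unfolding avoiding_labellings_def using \<open>finite W\<close> \<open>finite F\<close> \<open>finite (carrier \<Gamma>)\<close>
    by (intro finite_UN_I finite_PiE) auto
  have "k ^ card F = card (\<Pi>\<^sub>E e\<in>F. carrier \<Gamma>)"
    by (simp add: card_PiE [OF \<open>finite F\<close>] k_def)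
  also have "\<dots> \<le> card (\<Union>c\<in>(\<Pi>\<^sub>E v\<in>W. carrier \<Gamma>). avoiding_labellings \<Gamma> F ends c)"
    using labellings_subset_UN_avoiding_labellings [OF \<open>group \<Gamma>\<close> colorable \<open>W \<subseteq> V\<close>]
      \<open>finite (\<Union>c\<in>(\<Pi>\<^sub>E v\<in>W. carrier \<Gamma>). avoiding_labellings \<Gamma> F ends c)\<close>
    unfolding F_def by (rule card_mono [rotated])
  also have "\<dots> \<le> (\<Sum>c\<in>(\<Pi>\<^sub>E v\<in>W. carrier \<Gamma>). card (avoiding_labellings \<Gamma> F ends c))"
    by (rule card_UN_le) (simp add: finite_PiE \<open>finite W\<close> \<open>finite (carrier \<Gamma>)\<close>)
  also have "\<dots> = k ^ card W * (k - 1) ^ card F"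
    by (simp add: card_avoiding card_PiE [OF \<open>finite W\<close>] k_def)
  finally show ?thesis .
qed

lemma le_mult_ln_if_pow_le:
  fixes k m n :: nat
  assumes "2 \<le> k" and "k ^ m \<le> k ^ n * (k - 1) ^ m"
  shows "real m \<le> real n * real k * ln (real k)"
proof -
  have "real (k ^ m) \<le> real (k ^ n * (k - 1) ^ m)"
    using assms(2) by (simp only: of_nat_le_iff)
  then have "real k ^ m \<le> real k ^ n * (real k - 1) ^ m"
    using assms(1) by (simp add: of_nat_diff)
  then have "m * ln (real k) \<le> n * ln (real k) + m * ln (real k - 1)"
    using assms(1) by (simp add: ln_mult ln_realpow flip: ln_le_cancel_iff)
  moreover have "1 / real k \<le> ln (real k) - ln (real k - 1)"
  proof -
    have "ln ((real k - 1) / real k) \<le> (real k - 1) / real k - 1"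
      by (rule ln_le_minus_one) (use assms(1) in simp)
    moreover have "ln ((real k - 1) / real k) = ln (real k - 1) - ln (real k)"
      using assms(1) by (simp add: ln_div)
    moreover have "(real k - 1) / real k - 1 = - 1 / real k"
      using assms(1) by (simp add: field_simps)
    ultimately show ?thesis by linarith
  qed
  then have "m * (1 / real k) \<le> m * (ln (real k) - ln (real k - 1))"
    by (intro mult_left_mono) auto
  ultimately have "m / real k \<le> n * ln (real k)" by (simp add: algebra_simps)
  then show ?thesis using assms(1) by (simp add: field_simps)
qed

lemma sum_induced_degree:
  assumes graph: "is_oriented_graph V E ends" and "W \<subseteq> V"
  shows "(\<Sum>v\<in>W. induced_degree E ends W v) = 2 * card (induced_edges E ends W)"
proof -
  have "finite W" using \<open>W \<subseteq> V\<close> graph finite_subset by (auto simp: is_oriented_graph_def)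
  have "finite (induced_edges E ends W)"
    using graph by (simp add: induced_edges_def is_oriented_graph_def)
  have "(\<Sum>v\<in>W. induced_degree E ends W v) =
      (\<Sum>v\<in>W. \<Sum>e\<in>induced_edges E ends W. (if fst (ends e) = v \<or> snd (ends e) = v then 1 else 0))"
    unfolding induced_degree_def
    by (simp add: sum.If_cases \<open>finite (induced_edges E ends W)\<close> Int_def)
  also have "\<dots> = (\<Sum>e\<in>induced_edges E ends W. \<Sum>v\<in>W. (if fst (ends e) = v \<or> snd (ends e) = v then 1 else 0))"
    by (rule sum.swap)
  also have "\<dots> = (\<Sum>e\<in>induced_edges E ends W. 2)"
  proof (rule sum.cong [OF refl])
    fix e assume e: "e \<in> induced_edges E ends W"
    then have "{v\<in>W. fst (ends e) = v \<or> snd (ends e) = v} = {fst (ends e), snd (ends e)}"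
      and "fst (ends e) \<noteq> snd (ends e)"
      using graph by (auto simp: induced_edges_def is_oriented_graph_def)
    then show "(\<Sum>v\<in>W. (if fst (ends e) = v \<or> snd (ends e) = v then 1 else 0)) = (2::nat)"
      by (simp add: sum.If_cases \<open>finite W\<close> Int_def)
  qed
  finally show ?thesis by simp
qed

lemma exists_low_induced_degree:
  fixes \<Gamma> :: "('g, 'm) monoid_scheme" (structure)
  assumes graph: "is_oriented_graph V E ends" and "group \<Gamma>" "finite (carrier \<Gamma>)"
    and "2 \<le> card (carrier \<Gamma>)" and colorable: "group_colorable V E ends \<Gamma>"
    and "W \<subseteq> V" "W \<noteq> {}"
  defines "k \<equiv> card (carrier \<Gamma>)"
  shows "\<exists>v\<in>W. real (induced_degree E ends W v) \<le> 2 * real k * ln (real k)"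
proof (rule ccontr)
  assume "\<not> ?thesis"
  then have high: "2 * real k * ln (real k) < real (induced_degree E ends W v)" if "v \<in> W" for v
    using that by force
  have "finite W" using \<open>W \<subseteq> V\<close> graph finite_subset by (auto simp: is_oriented_graph_def)
  have "real (card W) * (2 * real k * ln (real k)) < (\<Sum>v\<in>W. real (induced_degree E ends W v))"
    using sum_strict_mono [OF \<open>finite W\<close> \<open>W \<noteq> {}\<close> high] by simp
  also have "\<dots> = real (\<Sum>v\<in>W. induced_degree E ends W v)"
    by simp
  also have "\<dots> = 2 * real (card (induced_edges E ends W))"
    using sum_induced_degree [OF graph \<open>W \<subseteq> V\<close>] by simp
  also have "\<dots> \<le> 2 * (real (card W) * real k * ln (real k))"
    using le_mult_ln_if_pow_le \<open>2 \<le> card (carrier \<Gamma>)\<close>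
      colorable_pow_card_induced_edges_le [OF graph \<open>group \<Gamma>\<close> \<open>finite (carrier \<Gamma>)\<close> colorable \<open>W \<subseteq> V\<close>]
    by (simp add: k_def)
  finally show False by (simp add: algebra_simps)
qed

section \<open>Bounds on \<open>h\<close>\<close>

lemma abelian_of_orderD:
  assumes "abelian_of_order \<Gamma> k"
  shows "group \<Gamma>" "finite (carrier \<Gamma>)" "card (carrier \<Gamma>) = k"
  using assms comm_group.axioms(2) by (auto simp: abelian_of_order_def)

lemma h_bound_2_k_ln_k:
  assumes "2 \<le> k"
  shows "h_bound k (nat \<lfloor>2 * real k * ln (real k)\<rfloor> + 1)"
  unfolding h_bound_def
proof (intro allI impI)
  fix V E :: "nat set" and ends and \<Gamma> \<Gamma>' :: "nat monoid" and m
  assume "is_oriented_graph V E ends \<and> abelian_of_order \<Gamma> k \<and> group_colorable V E ends \<Gamma>"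
    and "abelian_of_order \<Gamma>' m \<and> nat \<lfloor>2 * real k * ln (real k)\<rfloor> + 1 \<le> m"
  then have graph: "is_oriented_graph V E ends" and \<Gamma>: "abelian_of_order \<Gamma> k"
    and colorable: "group_colorable V E ends \<Gamma>"
    and \<Gamma>': "abelian_of_order \<Gamma>' m" and "nat \<lfloor>2 * real k * ln (real k)\<rfloor> < m"
    by auto
  show "group_colorable V E ends \<Gamma>'"
  proof (rule group_colorable_if_degenerate [OF graph abelian_of_orderD(1) [OF \<Gamma>']])
    fix W assume W: "W \<subseteq> V" "W \<noteq> {}"
    obtain v where "v \<in> W" "real (induced_degree E ends W v) \<le> 2 * real k * ln (real k)"
      using exists_low_induced_degree [OF graph abelian_of_orderD(1,2) [OF \<Gamma>] _ colorable W]
        \<open>2 \<le> k\<close> by (auto simp: abelian_of_orderD(3) [OF \<Gamma>])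
    then have "induced_degree E ends W v < card (carrier \<Gamma>')"
      using le_nat_floor \<open>nat \<lfloor>2 * real k * ln (real k)\<rfloor> < m\<close>
      by (fastforce simp: abelian_of_orderD(3) [OF \<Gamma>'])
    then show "\<exists>v\<in>W. induced_degree E ends W v < card (carrier \<Gamma>')" using \<open>v \<in> W\<close> by blast
  qed
qed

lemma h_bound_h: "2 \<le> k \<Longrightarrow> h_bound k (h k)"
  unfolding h_def by (rule LeastI [of "h_bound k"]) (rule h_bound_2_k_ln_k)

lemma h_le_2_k_ln_k:
  assumes "2 \<le> k"
  shows "real (h k) \<le> 2 * real k * ln (real k) + 1"
proof -
  have "h k \<le> nat \<lfloor>2 * real k * ln (real k)\<rfloor> + 1"
    unfolding h_def by (rule Least_le [of "h_bound k"]) (rule h_bound_2_k_ln_k [OF assms])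
  moreover have "0 \<le> 2 * real k * ln (real k)" using assms by simp
  ultimately show ?thesis by linarith
qed

lemma h_boundD:
  fixes V E :: "nat set" and \<Gamma> \<Gamma>' :: "nat monoid"
  assumes "h_bound k n" and "is_oriented_graph V E ends"
    and "abelian_of_order \<Gamma> k" "group_colorable V E ends \<Gamma>"
    and "abelian_of_order \<Gamma>' m" "n \<le> m"
  shows "group_colorable V E ends \<Gamma>'"
  using assms unfolding h_bound_def by meson

lemma h_prime_ge:
  fixes p :: nat
  assumes "prime p" "3 \<le> p"
  shows "2 * real p - 3 \<le> real (h p)"
proof -
  have "\<not> h_bound p n" if "n \<le> 2 * (p - 2)" for n
  proof
    assume "h_bound p n"
    moreover have "is_oriented_graph {..<p} {..<p * (p - 2)} (multicycle_ends (p - 2) p)"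
      using assms by (intro is_oriented_graph_multicycle) simp
    moreover have "abelian_of_order (zmod_group p) p"
      using assms by (simp add: abelian_of_order_zmod_group)
    moreover have "group_colorable {..<p} {..<p * (p - 2)} (multicycle_ends (p - 2) p) (zmod_group p)"
      using assms by (intro multicycle_colorable) simp_all
    moreover have "abelian_of_order (zmod_group (2 * (p - 2))) (2 * (p - 2))"
      using assms by (simp add: abelian_of_order_zmod_group)
    ultimately have "group_colorable {..<p} {..<p * (p - 2)} (multicycle_ends (p - 2) p)
        (zmod_group (2 * (p - 2)))"
      using that by (rule h_boundD)
    moreover have "odd p" using assms prime_odd_nat by simp
    ultimately show False using multicycle_not_colorable [of p "p - 2"] assms by simp
  qed
  moreover have "h_bound p (h p)" using h_bound_h assms by simp
  ultimately have "\<not> h p \<le> 2 * (p - 2)" by blast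
  then show ?thesis using assms by linarith
qed

lemma h_lower_frequently:
  fixes \<epsilon> :: real
  assumes "\<epsilon> > 0"
  shows "\<exists>\<^sub>F k in sequentially. (\<exists>n. h_bound k n) \<and> real (h k) > (2 - \<epsilon>) * real k"
proof -
  have "\<exists>\<^sub>F p in sequentially. prime (p::nat)"
    using primes_infinite by (simp add: cofinite_eq_sequentially [symmetric] INFM_iff_infinite)
  moreover have "\<forall>\<^sub>F p in sequentially. 3 \<le> p \<and> 3 < \<epsilon> * real p"
    using assms by (intro eventually_conj eventually_ge_at_top) real_asymp
  ultimately have "\<exists>\<^sub>F p in sequentially. prime p \<and> 3 \<le> p \<and> 3 < \<epsilon> * real p"
    by (rule frequently_eventually_frequently)
  then show ?thesis
  proof (rule frequently_elim1)
    fix p assume p: "prime p \<and> 3 \<le> p \<and> 3 < \<epsilon> * real p"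
    then have "h_bound p (h p)" using h_bound_h by simp
    have "(2 - \<epsilon>) * real p < 2 * real p - 3" using p by (simp add: algebra_simps)
    also have "\<dots> \<le> real (h p)" using h_prime_ge p by blast
    finally show "(\<exists>n. h_bound p n) \<and> real (h p) > (2 - \<epsilon>) * real p"
      using \<open>h_bound p (h p)\<close> by blast
  qed
qed

lemma h_upper_eventually:
  fixes \<epsilon> :: real
  assumes "\<epsilon> > 0"
  shows "\<forall>\<^sub>F k in sequentially. (\<exists>n. h_bound k n) \<and> real (h k) < (2 + \<epsilon>) * real k * ln (real k)"
proof -
  have "\<forall>\<^sub>F k in sequentially. 2 \<le> k \<and>
      2 * real k * ln (real k) + 1 < (2 + \<epsilon>) * real k * ln (real k)"
    using assms by (intro eventually_conj eventually_ge_at_top) real_asymp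
  then show ?thesis
  proof (rule eventually_mono)
    fix k assume "2 \<le> k \<and> 2 * real k * ln (real k) + 1 < (2 + \<epsilon>) * real k * ln (real k)"
    then have "h_bound k (h k)" and "real (h k) < (2 + \<epsilon>) * real k * ln (real k)"
      using h_bound_h h_le_2_k_ln_k [of k] by auto
    then show "(\<exists>n. h_bound k n) \<and> real (h k) < (2 + \<epsilon>) * real k * ln (real k)" by blast
  qed
qed

theorem mainTheorem10:
  shows "(\<forall>\<epsilon>::real. \<epsilon> > 0 \<longrightarrow>
            infinite {k::nat. (\<exists>n. h_bound k n) \<and> real (h k) > (2 - \<epsilon>) * real k})
       \<and> (\<forall>\<epsilon>::real. \<epsilon> > 0 \<longrightarrow> (\<exists>K::nat. \<forall>k\<ge>K.
            (\<exists>n. h_bound k n) \<and> real (h k) < (2 + \<epsilon>) * real k * ln (real k)))"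
proof (intro conjI allI impI)
  fix \<epsilon> :: real assume "\<epsilon> > 0"
  from h_lower_frequently [OF this]
  show "infinite {k. (\<exists>n. h_bound k n) \<and> real (h k) > (2 - \<epsilon>) * real k}"
    by (simp add: cofinite_eq_sequentially [symmetric] INFM_iff_infinite)
next
  fix \<epsilon> :: real assume "\<epsilon> > 0"
  from h_upper_eventually [OF this]
  show "\<exists>K. \<forall>k\<ge>K. (\<exists>n. h_bound k n) \<and> real (h k) < (2 + \<epsilon>) * real k * ln (real k)"
    unfolding eventually_sequentially .
qed

end
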